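(* For every nice graph $G$ with maximum degree at most $4$, $\chi'_{qm\Sigma}(G)\le 7$.
   Context: All graphs are simple and finite. A $k$-edge-coloring of $G$ is any map $c:E(G)\to\{1,\dots,k\}$ (adjacent edges may share colors). It induces $\sigma_c(v)=\sum_{u\in N(v)}c(vu)$. The coloring is neighbor sum distinguishing (NSD) if $\sigma_c(u)\ne\sigma_c(v)$ for every edge $uv$. It is quasi-majority if every vertex $v$ is incident to at most $\lceil d(v)/2\rceil$ edges of each single color. $\chi'_{qm\Sigma}(G)$ denotes the least $k$ such that $G$ has a $k$-edge-coloring that is both quasi-majority and NSD. A graph is nice if it has no connected component isomorphic to $K_2$. *)

theory Defs
  imports Complex_Main
begin

definition simple_graph :: "'a set \<Rightarrow> 'a set set \<Rightarrow> bool" where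
  "simple_graph V E \<longleftrightarrow> finite V \<and>
     (\<forall>e\<in>E. \<exists>u v. u \<noteq> v \<and> u \<in> V \<and> v \<in> V \<and> e = {u, v})"

definition nbhd :: "'a set \<Rightarrow> 'a set set \<Rightarrow> 'a \<Rightarrow> 'a set" where
  "nbhd V E v = {u \<in> V. {v, u} \<in> E}"

definition degree :: "'a set \<Rightarrow> 'a set set \<Rightarrow> 'a \<Rightarrow> nat" where
  "degree V E v = card (nbhd V E v)"

definition max_degree_le :: "'a set \<Rightarrow> 'a set set \<Rightarrow> nat \<Rightarrow> bool" where
  "max_degree_le V E D \<longleftrightarrow> (\<forall>v\<in>V. degree V E v \<le> D)"

text \<open>Nice: no connected component isomorphic to K2, i.e. no edge both of whose
  endpoints have degree 1.\<close>
definition nice :: "'a set \<Rightarrow> 'a set set \<Rightarrow> bool" where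
  "nice V E \<longleftrightarrow> \<not> (\<exists>u\<in>V. \<exists>v\<in>V. {u, v} \<in> E \<and> degree V E u = 1 \<and> degree V E v = 1)"

definition edge_coloring :: "'a set set \<Rightarrow> nat \<Rightarrow> ('a set \<Rightarrow> nat) \<Rightarrow> bool" where
  "edge_coloring E k c \<longleftrightarrow> (\<forall>e\<in>E. c e \<in> {1..k})"

definition sigma :: "'a set \<Rightarrow> 'a set set \<Rightarrow> ('a set \<Rightarrow> nat) \<Rightarrow> 'a \<Rightarrow> nat" where
  "sigma V E c v = (\<Sum>u\<in>nbhd V E v. c {v, u})"

definition nsd :: "'a set \<Rightarrow> 'a set set \<Rightarrow> ('a set \<Rightarrow> nat) \<Rightarrow> bool" where
  "nsd V E c \<longleftrightarrow> (\<forall>u\<in>V. \<forall>v\<in>V. {u, v} \<in> E \<longrightarrow> sigma V E c u \<noteq> sigma V E c v)"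

definition quasi_majority :: "'a set \<Rightarrow> 'a set set \<Rightarrow> ('a set \<Rightarrow> nat) \<Rightarrow> bool" where
  "quasi_majority V E c \<longleftrightarrow> (\<forall>v\<in>V. \<forall>i::nat.
     real (card {u \<in> nbhd V E v. c {v, u} = i}) \<le> of_int \<lceil>real (degree V E v) / 2\<rceil>)"

definition qm_nsd_colorable :: "'a set \<Rightarrow> 'a set set \<Rightarrow> nat \<Rightarrow> bool" where
  "qm_nsd_colorable V E k \<longleftrightarrow>
     (\<exists>c. edge_coloring E k c \<and> quasi_majority V E c \<and> nsd V E c)"

definition chi_qm_sigma :: "'a set \<Rightarrow> 'a set set \<Rightarrow> nat" where
  "chi_qm_sigma V E = (LEAST k. qm_nsd_colorable V E k)"

end

(*
  Induction on the number of vertices, for a stronger invariant: a quasi-majority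
  7-edge-colouring that distinguishes the ends of every edge outside K2 components.
  Delete a vertex v, colour G - v, and choose colours f u for the at most four edges vu.
  A neighbour u has at most three other neighbours and at most one colour that is already a
  strict majority at u, so at least 3 + deg_N u of the seven colours keep u apart from its
  neighbours outside N = N(v) and keep quasi-majority at u. Choosing from these lists so
  that the vertices of N stay apart from each other and from v, and no colour is used more
  than ceil(|N|/2) times at v, is a problem about sums of integers. Greedy choices solve it
  except for the last two colours when |N| = 4; there a 3 x 3 grid of candidates always
  contains a good pair.
*)

theory Submission
  imports Defs
begin

section \<open>Pairs in 3 \<times> 3 grids of integers\<close>

lemma obtain_sorted_triple:
  fixes A :: "'a::linorder set"
  assumes "card A = 3"
  obtains a1 a2 a3 where "a1 < a2" "a2 < a3" "A = {a1, a2, a3}"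
proof -
  obtain x y z where A: "A = {x, y, z}" "x \<noteq> y" "y \<noteq> z" "x \<noteq> z"
    using assms by (auto simp: card_3_iff)
  have "x < y \<or> y < x" "y < z \<or> z < y" "x < z \<or> z < x" using A by auto
  then show thesis
    by (elim disjE) (use that A in \<open>auto simp: insert_commute\<close>)
qed

lemma obtain_sorted_triple_subset:
  fixes A :: "'a::linorder set"
  assumes "finite A" "3 \<le> card A"
  obtains a1 a2 a3 where "a1 < a2" "a2 < a3" "{a1, a2, a3} \<subseteq> A"
proof -
  obtain B where B: "B \<subseteq> A" "card B = 3"
    using obtain_subset_with_card_n[OF assms(2)] by blast
  obtain a1 a2 a3 where "a1 < a2" "a2 < a3" "B = {a1, a2, a3}"
    by (rule obtain_sorted_triple[OF B(2)])
  with B(1) show thesis using that by blast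
qed

text \<open>Once the three candidates on each side are sorted, each of the following claims is a
  disjunction of linear constraints, which \<open>smt\<close> decides.\<close>

lemma ex_pair_avoiding_diagonal_two_sums_difference:
  fixes A B :: "int set"
  assumes "finite A" "3 \<le> card A" "finite B" "3 \<le> card B"
  shows "\<exists>a\<in>A. \<exists>b\<in>B. a \<noteq> b \<and> a + b \<noteq> \<alpha> \<and> a + b \<noteq> \<beta> \<and> a - b \<noteq> \<delta>"
proof -
  obtain a1 a2 a3 where a: "a1 < a2" "a2 < a3" "{a1, a2, a3} \<subseteq> A"
    using obtain_sorted_triple_subset assms(1,2) by blast
  obtain b1 b2 b3 where b: "b1 < b2" "b2 < b3" "{b1, b2, b3} \<subseteq> B"
    using obtain_sorted_triple_subset assms(3,4) by blast
  have "\<exists>a\<in>{a1, a2, a3}. \<exists>b\<in>{b1, b2, b3}.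
      a \<noteq> b \<and> a + b \<noteq> \<alpha> \<and> a + b \<noteq> \<beta> \<and> a - b \<noteq> \<delta>"
    using a(1,2) b(1,2) by simp smt
  then show ?thesis using a(3) b(3) by blast
qed

lemma ex_pair_avoiding_diagonal_value_two_sums:
  fixes A B :: "int set"
  assumes "finite A" "3 \<le> card A" "finite B" "3 \<le> card B"
  shows "\<exists>a\<in>A. \<exists>b\<in>B. a \<noteq> b \<and> b \<noteq> \<gamma> \<and> a + b \<noteq> \<alpha> \<and> a + b \<noteq> \<beta>"
proof -
  obtain a1 a2 a3 where a: "a1 < a2" "a2 < a3" "{a1, a2, a3} \<subseteq> A"
    using obtain_sorted_triple_subset assms(1,2) by blast
  obtain b1 b2 b3 where b: "b1 < b2" "b2 < b3" "{b1, b2, b3} \<subseteq> B"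
    using obtain_sorted_triple_subset assms(3,4) by blast
  have "\<exists>a\<in>{a1, a2, a3}. \<exists>b\<in>{b1, b2, b3}.
      a \<noteq> b \<and> b \<noteq> \<gamma> \<and> a + b \<noteq> \<alpha> \<and> a + b \<noteq> \<beta>"
    using a(1,2) b(1,2) by simp smt
  then show ?thesis using a(3) b(3) by blast
qed

lemma ex_pair_avoiding_diagonal_translate_if_ne:
  fixes A B C :: "int set"
  assumes "card A = 3" "card B = 3" "card C = 3" "A \<noteq> B"
  shows "\<exists>a\<in>A. \<exists>b\<in>B. a \<noteq> b \<and> (\<forall>c\<in>C. a + b + c \<noteq> t)"
proof -
  obtain a1 a2 a3 where a: "a1 < a2" "a2 < a3" "A = {a1, a2, a3}"
    using obtain_sorted_triple assms(1) by blast
  obtain b1 b2 b3 where b: "b1 < b2" "b2 < b3" "B = {b1, b2, b3}"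
    using obtain_sorted_triple assms(2) by blast
  obtain c1 c2 c3 where c: "C = {c1, c2, c3}"
    using obtain_sorted_triple assms(3) by blast
  have "\<not> (a1 = b1 \<and> a2 = b2 \<and> a3 = b3)" using a(3) b(3) assms(4) by auto
  then have "\<exists>a\<in>{a1, a2, a3}. \<exists>b\<in>{b1, b2, b3}. a \<noteq> b \<and>
      a + b \<noteq> t1 \<and> a + b \<noteq> t2 \<and> a + b \<noteq> t3" for t1 t2 t3
    using a(1,2) b(1,2) by simp smt
  then obtain a b where ab: "a \<in> A" "b \<in> B" "a \<noteq> b"
      "a + b \<noteq> t - c1" "a + b \<noteq> t - c2" "a + b \<noteq> t - c3"
    using a(3) b(3) by blast
  have "\<forall>c\<in>C. a + b + c \<noteq> t" using ab(4-6) c by auto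
  with ab(1-3) show ?thesis by blast
qed

lemma ex_pair_avoiding_diagonal_translate_self:
  fixes A :: "int set"
  assumes "card A = 3" "t \<noteq> \<Sum>A"
  shows "\<exists>a\<in>A. \<exists>b\<in>A. a \<noteq> b \<and> (\<forall>c\<in>A. a + b + c \<noteq> t)"
proof -
  obtain a1 a2 a3 where a: "a1 < a2" "a2 < a3" "A = {a1, a2, a3}"
    using obtain_sorted_triple assms(1) by blast
  have "t \<noteq> a1 + a2 + a3" using assms(2) a by simp
  then have "\<exists>a\<in>{a1, a2, a3}. \<exists>b\<in>{a1, a2, a3}.
      a \<noteq> b \<and> (\<forall>c\<in>{a1, a2, a3}. a + b + c \<noteq> t)"
    using a(1,2) by simp smt
  then show ?thesis using a(3) by blast
qed

section \<open>Choosing the colours at a new vertex\<close>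

lemma card_avoiding_values:
  fixes A X :: "int set" and s :: "'a \<Rightarrow> int"
  assumes "finite A" "finite X" "finite C"
  shows "card A - card X - card C \<le> card {x \<in> A. x \<notin> X \<and> (\<forall>w\<in>C. t + x \<noteq> s w)}"
proof -
  let ?Y = "(\<lambda>w. s w - t) ` C"
  have "card A - card X \<le> card (A - X)"
    using assms(2) by (rule diff_card_le_card_Diff)
  moreover have "card (A - X) - card ?Y \<le> card (A - X - ?Y)"
    using assms(3) by (intro diff_card_le_card_Diff) simp
  moreover have "card ?Y \<le> card C"
    using assms(3) by (rule card_image_le)
  moreover have "card (A - X - ?Y) \<le> card {x \<in> A. x \<notin> X \<and> (\<forall>w\<in>C. t + x \<noteq> s w)}"
    using assms(1) by (intro card_mono) force+
  ultimately show ?thesis by linarith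
qed

lemma ex_avoiding_value:
  fixes A X :: "int set" and s :: "'a \<Rightarrow> int"
  assumes "finite A" "finite X" "finite C" "card X + card C < card A"
  shows "\<exists>x\<in>A. x \<notin> X \<and> (\<forall>w\<in>C. t + x \<noteq> s w)"
proof -
  have "0 < card {x \<in> A. x \<notin> X \<and> (\<forall>w\<in>C. t + x \<noteq> s w)}"
    using card_avoiding_values[OF assms(1-3), of t s] assms(4) by linarith
  then have "{x \<in> A. x \<notin> X \<and> (\<forall>w\<in>C. t + x \<noteq> s w)} \<noteq> {}" by force
  then show ?thesis by blast
qed

lemma card_fiber_le_1:
  assumes "finite N" "inj_on f N"
  shows "card {u \<in> N. f u = j} \<le> 1"
  using assms by (auto simp: card_le_Suc0_iff_eq inj_on_def)

lemma card_fiber_union_le_2: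
  assumes "finite A" "finite B" "inj_on f A" "inj_on f B"
  shows "card {u \<in> A \<union> B. f u = j} \<le> 2"
proof -
  have "{u \<in> A \<union> B. f u = j} = {u \<in> A. f u = j} \<union> {u \<in> B. f u = j}" by auto
  then have "card {u \<in> A \<union> B. f u = j} \<le> card {u \<in> A. f u = j} + card {u \<in> B. f u = j}"
    by (simp add: card_Un_le)
  then show ?thesis
    using card_fiber_le_1[OF assms(1,3), of j] card_fiber_le_1[OF assms(2,4), of j] by linarith
qed

text \<open>A new vertex \<open>v\<close> with neighbourhood \<open>N\<close>: \<open>s u\<close> is the colour sum at \<open>u\<close> without \<open>v\<close>
  and \<open>f u\<close> the colour of the edge \<open>vu\<close>. The conditions keep adjacent vertices of \<open>N\<close> apart,
  keep \<open>v\<close> (whose sum is \<open>sum f N\<close>) apart from its neighbours, and give quasi-majority at \<open>v\<close>.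
  With a single neighbour \<open>u\<close> the separation of \<open>v\<close> from \<open>u\<close> amounts to \<open>s u \<noteq> 0\<close>, which
  does not depend on \<open>f\<close>; it is left to the graph.\<close>

definition admissible_choice ::
  "'a set \<Rightarrow> ('a \<Rightarrow> int set) \<Rightarrow> ('a \<Rightarrow> int) \<Rightarrow> ('a \<Rightarrow> 'a \<Rightarrow> bool) \<Rightarrow>
    ('a \<Rightarrow> int) \<Rightarrow> bool" where
  "admissible_choice N L s adj f \<longleftrightarrow>
     (\<forall>u\<in>N. f u \<in> L u) \<and>
     (\<forall>u\<in>N. \<forall>w\<in>N. adj u w \<longrightarrow> s u + f u \<noteq> s w + f w) \<and>
     (2 \<le> card N \<longrightarrow> (\<forall>u\<in>N. sum f N \<noteq> s u + f u)) \<and>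
     (\<forall>j. 2 * card {u \<in> N. f u = j} \<le> card N + 1)"

lemma admissible_choice_le_1:
  assumes "card N \<le> 1" "finite N" "\<forall>u\<in>N. L u \<noteq> {}" "\<forall>u\<in>N. \<not> adj u u"
  shows "\<exists>f. admissible_choice N L s adj f"
proof -
  have "N = {} \<or> (\<exists>u. N = {u})" using assms(1,2) by (auto simp: le_Suc_eq card_1_singleton_iff)
  then show ?thesis
  proof
    assume "N = {}"
    then show ?thesis by (simp add: admissible_choice_def)
  next
    assume "\<exists>u. N = {u}"
    then obtain u where N: "N = {u}" by blast
    then obtain x where "x \<in> L u" using assms(3) by blast
    have "admissible_choice N L s adj (\<lambda>_. x)"
      unfolding admissible_choice_def
    proof (intro conjI allI)
      show "2 * card {w \<in> N. x = j} \<le> card N + 1" for j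
        using card_mono[OF assms(2), of "{w \<in> N. x = j}"] assms(1) by auto
    qed (use N \<open>x \<in> L u\<close> assms(4) in auto)
    then show ?thesis by blast
  qed
qed

lemma admissible_choice_2:
  assumes N: "N = {u1, u2}" "u1 \<noteq> u2"
    and L: "\<forall>u\<in>N. finite (L u) \<and> 3 + card {w \<in> N. adj u w} \<le> card (L u)"
    and adj: "\<forall>u w. adj u w = adj w u" "\<forall>u. \<not> adj u u"
  shows "\<exists>f. admissible_choice N L s adj f"
proof -
  have finN: "finite N" using N by simp
  have deg: "card {w \<in> C. adj u w} \<le> card {w \<in> N. adj u w}" if "C \<subseteq> N" for u C
    using that finN by (intro card_mono) auto
  have L1: "finite (L u1)" "3 \<le> card (L u1)"
    and L2: "finite (L u2)" "3 + card {w \<in> N. adj u2 w} \<le> card (L u2)"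
    using L N by auto
  obtain x1 where x1: "x1 \<in> L u1" "x1 \<noteq> s u2"
    using ex_avoiding_value[of "L u1" "{s u2}" "{}"] L1 by auto
  have "card {x1, s u1} + card {w \<in> {u1}. adj u2 w} < card (L u2)"
    using L2 deg[of "{u1}" u2] N by (simp add: card_insert_if)
  then obtain x2 where x2: "x2 \<in> L u2" "x2 \<notin> {x1, s u1}"
    "\<forall>w\<in>{w \<in> {u1}. adj u2 w}. s u2 + x2 \<noteq> s w + x1"
    using ex_avoiding_value[of "L u2" "{x1, s u1}" "{w \<in> {u1}. adj u2 w}" "s u2" "\<lambda>w. s w + x1"]
      L2 by auto
  define f where "f = (\<lambda>_. x2)(u1 := x1)"
  have "admissible_choice N L s adj f"
    unfolding admissible_choice_def
  proof (intro conjI allI)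
    show "2 * card {u \<in> N. f u = j} \<le> card N + 1" for j
      using card_fiber_le_1[OF finN, of f j] x2(2) N by (simp add: f_def)
  qed (use x1 x2 N adj in \<open>auto simp: f_def\<close>)
  then show ?thesis by blast
qed

lemma admissible_choice_3:
  assumes N: "N = {u1, u2, u3}" "distinct [u1, u2, u3]"
    and L: "\<forall>u\<in>N. finite (L u) \<and> 3 + card {w \<in> N. adj u w} \<le> card (L u)"
    and adj: "\<forall>u w. adj u w = adj w u" "\<forall>u. \<not> adj u u"
  shows "\<exists>f. admissible_choice N L s adj f"
proof -
  have finN: "finite N" using N by simp
  have deg: "card {w \<in> C. adj u w} \<le> card {w \<in> N. adj u w}" if "C \<subseteq> N" for u C
    using that finN by (intro card_mono) auto
  have L1: "finite (L u1)" "3 \<le> card (L u1)"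
    and L2: "finite (L u2)" "3 + card {w \<in> N. adj u2 w} \<le> card (L u2)"
    and L3: "finite (L u3)" "3 + card {w \<in> N. adj u3 w} \<le> card (L u3)"
    using L N by auto
  obtain x1 where x1: "x1 \<in> L u1"
    using ex_avoiding_value[of "L u1" "{}" "{}::'a set"] L1 by auto
  have "card {x1, s u3 - x1} + card {w \<in> {u1}. adj u2 w} < card (L u2)"
    using L2 deg[of "{u1}" u2] N by (simp add: card_insert_if)
  then obtain x2 where x2: "x2 \<in> L u2" "x2 \<notin> {x1, s u3 - x1}"
    "\<forall>w\<in>{w \<in> {u1}. adj u2 w}. s u2 + x2 \<noteq> s w + x1"
    using ex_avoiding_value[of "L u2" "{x1, s u3 - x1}" "{w \<in> {u1}. adj u2 w}" "s u2"
        "\<lambda>w. s w + x1"] L2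
    by auto
  define g :: "'a \<Rightarrow> int" where "g = (\<lambda>_. x1)(u2 := x2)"
  have "card {s u1 - x2, s u2 - x1} + card {w \<in> {u1, u2}. adj u3 w} < card (L u3)"
    using L3 deg[of "{u1, u2}" u3] N by (simp add: card_insert_if)
  then obtain x3 where x3: "x3 \<in> L u3" "x3 \<notin> {s u1 - x2, s u2 - x1}"
    "\<forall>w\<in>{w \<in> {u1, u2}. adj u3 w}. s u3 + x3 \<noteq> s w + g w"
    using ex_avoiding_value[of "L u3" "{s u1 - x2, s u2 - x1}" "{w \<in> {u1, u2}. adj u3 w}" "s u3"
        "\<lambda>w. s w + g w"] L3
    by auto
  define f where "f = g(u3 := x3)"
  have f: "f u1 = x1" "f u2 = x2" "f u3 = x3"
    using N(2) by (auto simp: f_def g_def)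
  have "admissible_choice N L s adj f"
    unfolding admissible_choice_def
  proof (intro conjI allI)
    show "2 * card {u \<in> N. f u = j} \<le> card N + 1" for j
    proof -
      have "card {u \<in> {u1, u2} \<union> {u3}. f u = j} \<le> 2"
        using x2(2) f by (intro card_fiber_union_le_2) auto
      moreover have "N = {u1, u2} \<union> {u3}" using N by auto
      ultimately have "card {u \<in> N. f u = j} \<le> 2" by simp
      then show ?thesis using N by simp
    qed
  qed (use x1 x2 x3 N adj f in \<open>auto simp: g_def\<close>)
  then show ?thesis by blast
qed

lemma admissible_choice_4I:
  assumes N: "N = {u1, u2, u3, u4}" "distinct [u1, u2, u3, u4]"
    and pairs: "f u1 \<noteq> f u2" "f u3 \<noteq> f u4"
    and lists: "\<forall>u\<in>N. f u \<in> L u"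
    and sums: "\<forall>u\<in>N. f u1 + f u2 + f u3 + f u4 \<noteq> s u + f u"
    and adjacent: "\<forall>u\<in>N. \<forall>w\<in>N. adj u w \<longrightarrow> s u + f u \<noteq> s w + f w"
  shows "admissible_choice N L s adj f"
  unfolding admissible_choice_def
proof (intro conjI allI)
  show "2 * card {u \<in> N. f u = j} \<le> card N + 1" for j
  proof -
    have "card {u \<in> {u1, u2} \<union> {u3, u4}. f u = j} \<le> 2"
      using pairs by (intro card_fiber_union_le_2) auto
    moreover have "N = {u1, u2} \<union> {u3, u4}" using N by auto
    ultimately have "card {u \<in> N. f u = j} \<le> 2" by simp
    then show ?thesis using N by simp
  qed
  show "2 \<le> card N \<longrightarrow> (\<forall>u\<in>N. sum f N \<noteq> s u + f u)"
    using sums N by (simp add: add.assoc)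
qed (use lists adjacent in auto)

lemma ball_ball_insert4_symmetric:
  assumes "\<And>u w. P u w \<Longrightarrow> P w u" "\<And>u. P u u"
    and "P a b" "P a c" "P a d" "P b c" "P b d" "P c d"
  shows "\<forall>u\<in>{a, b, c, d}. \<forall>w\<in>{a, b, c, d}. P u w"
  using assms by blast

lemma card_avoiding_values_unused_neighbour:
  fixes A X :: "int set" and s :: "'a \<Rightarrow> int"
  assumes N: "finite N" "C \<subseteq> N" "z \<in> N - C" "adj z"
    and A: "finite A" "finite X" "card X + 2 + card {w \<in> N. adj w} \<le> card A"
  shows "3 \<le> card {x \<in> A. x \<notin> X \<and> (\<forall>w\<in>{w \<in> C. adj w}. t + x \<noteq> s w)}"
proof -
  have "finite {w \<in> C. adj w}" using finite_subset[OF N(2,1)] by simp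
  then have "card {w \<in> C. adj w} + 1 = card (insert z {w \<in> C. adj w})" using N(3) by simp
  also have "\<dots> \<le> card {w \<in> N. adj w}" using N by (intro card_mono) auto
  finally have "card {w \<in> C. adj w} + 1 \<le> card {w \<in> N. adj w}" .
  moreover have "card A - card X - card {w \<in> C. adj w}
      \<le> card {x \<in> A. x \<notin> X \<and> (\<forall>w\<in>{w \<in> C. adj w}. t + x \<noteq> s w)}"
    using A(1,2) \<open>finite {w \<in> C. adj w}\<close> by (rule card_avoiding_values)
  ultimately show ?thesis using A(3) by linarith
qed

text \<open>The two vertices of an edge inside \<open>N\<close> are coloured last: since their common edge does
  not yet constrain them, each keeps three candidates, and a 3 \<times> 3 grid argument
  chooses the pair.\<close>

lemma admissible_choice_4_edge:
  assumes N: "N = {u1, u2, u3, u4}" "distinct [u1, u2, u3, u4]"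
    and L: "\<forall>u\<in>N. finite (L u) \<and> 3 + card {w \<in> N. adj u w} \<le> card (L u)"
    and adj: "\<forall>u w. adj u w = adj w u" "\<forall>u. \<not> adj u u" and edge: "adj u3 u4"
  shows "\<exists>f. admissible_choice N L s adj f"
proof -
  have finN: "finite N" using N by simp
  have L1: "finite (L u1)" "3 \<le> card (L u1)"
    and L2: "finite (L u2)" "3 + card {w \<in> N. adj u2 w} \<le> card (L u2)"
    and L3: "finite (L u3)" "3 + card {w \<in> N. adj u3 w} \<le> card (L u3)"
    and L4: "finite (L u4)" "3 + card {w \<in> N. adj u4 w} \<le> card (L u4)"
    using L N by auto
  obtain x1 where x1: "x1 \<in> L u1"
    using ex_avoiding_value[of "L u1" "{}" "{}::'a set"] L1 by auto
  have "card {w \<in> {u1}. adj u2 w} \<le> card {w \<in> N. adj u2 w}"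
    using N finN by (intro card_mono) auto
  then obtain x2 where x2: "x2 \<in> L u2" "x2 \<noteq> x1"
    "\<forall>w\<in>{w \<in> {u1}. adj u2 w}. s u2 + x2 \<noteq> s w + x1"
    using ex_avoiding_value[of "L u2" "{x1}" "{w \<in> {u1}. adj u2 w}" "s u2" "\<lambda>w. s w + x1"] L2
    by auto
  define g :: "'a \<Rightarrow> int" where "g = (\<lambda>_. x1)(u2 := x2)"
  define A3 where "A3 = {x \<in> L u3. x \<notin> {s u4 - x1 - x2} \<and>
    (\<forall>w\<in>{w \<in> {u1, u2}. adj u3 w}. s u3 + x \<noteq> s w + g w)}"
  define A4 where "A4 = {x \<in> L u4. x \<notin> {s u3 - x1 - x2} \<and>
    (\<forall>w\<in>{w \<in> {u1, u2}. adj u4 w}. s u4 + x \<noteq> s w + g w)}"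
  have "3 \<le> card A3" unfolding A3_def
    by (rule card_avoiding_values_unused_neighbour[where N = N and z = u4])
      (use finN N L3 edge in auto)
  moreover have "3 \<le> card A4" unfolding A4_def
    by (rule card_avoiding_values_unused_neighbour[where N = N and z = u3])
      (use finN N L4 edge adj(1) in auto)
  moreover have "finite A3" "finite A4" using L3(1) L4(1) unfolding A3_def A4_def by auto
  ultimately obtain a b where ab: "a \<in> A3" "b \<in> A4" "a \<noteq> b"
    "a + b \<noteq> s u1 - x2" "a + b \<noteq> s u2 - x1" "a - b \<noteq> s u4 - s u3"
    using ex_pair_avoiding_diagonal_two_sums_difference by blast
  have a: "a \<in> L u3" "a \<noteq> s u4 - x1 - x2"
    "adj u3 u1 \<longrightarrow> s u3 + a \<noteq> s u1 + x1" "adj u3 u2 \<longrightarrow> s u3 + a \<noteq> s u2 + x2"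
    using ab(1) N(2) unfolding A3_def g_def by auto
  have b: "b \<in> L u4" "b \<noteq> s u3 - x1 - x2"
    "adj u4 u1 \<longrightarrow> s u4 + b \<noteq> s u1 + x1" "adj u4 u2 \<longrightarrow> s u4 + b \<noteq> s u2 + x2"
    using ab(2) N(2) unfolding A4_def g_def by auto
  define f where "f = g(u3 := a, u4 := b)"
  have f: "f u1 = x1" "f u2 = x2" "f u3 = a" "f u4 = b"
    using N(2) by (auto simp: f_def g_def)
  have "\<forall>u\<in>N. \<forall>w\<in>N. adj u w \<longrightarrow> s u + f u \<noteq> s w + f w"
    unfolding N(1)
  proof (rule ball_ball_insert4_symmetric)
    show "adj u w \<longrightarrow> s u + f u \<noteq> s w + f w \<Longrightarrow>
        adj w u \<longrightarrow> s w + f w \<noteq> s u + f u" for u w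
      using adj(1) by metis
    show "adj u u \<longrightarrow> s u + f u \<noteq> s u + f u" for u using adj(2) by simp
    show "adj u1 u2 \<longrightarrow> s u1 + f u1 \<noteq> s u2 + f u2" using x2(3) adj(1) f by auto
    show "adj u1 u3 \<longrightarrow> s u1 + f u1 \<noteq> s u3 + f u3" using a(3) adj(1) f by auto
    show "adj u1 u4 \<longrightarrow> s u1 + f u1 \<noteq> s u4 + f u4" using b(3) adj(1) f by auto
    show "adj u2 u3 \<longrightarrow> s u2 + f u2 \<noteq> s u3 + f u3" using a(4) adj(1) f by auto
    show "adj u2 u4 \<longrightarrow> s u2 + f u2 \<noteq> s u4 + f u4" using b(4) adj(1) f by auto
    show "adj u3 u4 \<longrightarrow> s u3 + f u3 \<noteq> s u4 + f u4" using ab(6) f by auto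
  qed
  moreover have "\<forall>u\<in>N. f u \<in> L u" using x1 x2(1) a(1) b(1) N(1) f by auto
  moreover have "\<forall>u\<in>N. f u1 + f u2 + f u3 + f u4 \<noteq> s u + f u"
    using ab(4,5) a(2) b(2) N(1) f by auto
  ultimately have "admissible_choice N L s adj f"
    using admissible_choice_4I[OF N] x2(2) ab(3) f by simp
  then show ?thesis by blast
qed

lemma card_4_enumerate:
  assumes "card N = 4" "i \<in> N" "j \<in> N" "i \<noteq> j"
  obtains k l where "N = {i, j, k, l}" "distinct [i, j, k, l]"
proof -
  have "finite N" using assms(1) by (metis card.infinite zero_neq_numeral)
  then have "card (N - {i, j}) = 2" using assms by (simp add: card_Diff_subset)
  then obtain k l where kl: "N - {i, j} = {k, l}" "k \<noteq> l" by (auto simp: card_2_iff)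
  then have "N = {i, j, k, l}" using assms(2,3) by auto
  moreover have "distinct [i, j, k, l]" using kl assms(4) by auto
  ultimately show thesis by (rule that)
qed

lemma card_4_elements:
  assumes "card N = 4"
  obtains u1 u2 u3 u4 where "N = {u1, u2, u3, u4}" "distinct [u1, u2, u3, u4]"
proof -
  obtain u1 B where B: "N = insert u1 B" "u1 \<notin> B" "card B = 3"
    using card_eq_SucD[of N 3] assms by auto
  then obtain u2 u3 u4 where "B = {u2, u3, u4}" "distinct [u2, u3, u4]"
    by (auto simp: card_3_iff)
  then show thesis using B that by auto
qed

lemma admissible_choice_4_from_pair:
  assumes N: "N = {i, j, k, l}" "distinct [i, j, k, l]"
    and no_adj: "\<forall>u\<in>N. \<forall>w\<in>N. \<not> adj u w"
    and pq: "p \<in> L i" "q \<in> L j" "p \<noteq> q"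
    and CD: "C \<subseteq> L k" "card C = 3" "D \<subseteq> L l" "card D = 3"
    and avoid: "\<forall>y\<in>C. p + q + y \<noteq> s l"
  shows "\<exists>f. admissible_choice N L s adj f"
proof -
  have "finite C" "finite D" using CD(2,4) by (auto intro: card_ge_0_finite)
  then obtain c d where cd: "c \<in> C" "d \<in> D" "c \<noteq> d"
    "d \<noteq> s k - p - q" "c + d \<noteq> s i - q" "c + d \<noteq> s j - p"
    using ex_pair_avoiding_diagonal_value_two_sums[of C D "s k - p - q" "s i - q" "s j - p"] CD(2,4)
    by auto
  define f where "f = (\<lambda>_. p)(j := q, k := c, l := d)"
  have f: "f i = p" "f j = q" "f k = c" "f l = d"
    using N(2) by (auto simp: f_def)
  have "admissible_choice N L s adj f"
    by (rule admissible_choice_4I[OF N]) (use pq cd CD avoid no_adj N(1) f in auto)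
  then show ?thesis by blast
qed

text \<open>With two copies of the smallest two values, every sum of three of them misses
  \<open>a1 + a2 + a3\<close>.\<close>

lemma admissible_choice_4_uniform:
  assumes N: "N = {u1, u2, u3, u4}" "distinct [u1, u2, u3, u4]"
    and no_adj: "\<forall>u\<in>N. \<forall>w\<in>N. \<not> adj u w"
    and A: "card A = 3" "\<forall>u\<in>N. A \<subseteq> L u" and s: "\<forall>u\<in>N. s u = \<Sum>A"
  shows "\<exists>f. admissible_choice N L s adj f"
proof -
  obtain a1 a2 a3 where a: "a1 < a2" "a2 < a3" "A = {a1, a2, a3}"
    by (rule obtain_sorted_triple[OF A(1)])
  define f where "f = (\<lambda>_. a1)(u2 := a2, u4 := a2)"
  have f: "f u1 = a1" "f u2 = a2" "f u3 = a1" "f u4 = a2"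
    using N(2) by (auto simp: f_def)
  have "admissible_choice N L s adj f"
    by (rule admissible_choice_4I[OF N]) (use a A(2) s no_adj N(1) f in auto)
  then show ?thesis by blast
qed

lemma admissible_choice_4_independent:
  assumes N: "card N = 4"
    and L: "\<forall>u\<in>N. finite (L u) \<and> 3 \<le> card (L u)"
    and no_adj: "\<forall>u\<in>N. \<forall>w\<in>N. \<not> adj u w"
  shows "\<exists>f. admissible_choice N L s adj f"
proof -
  have "\<forall>u\<in>N. \<exists>B. B \<subseteq> L u \<and> card B = 3"
    using L by (meson obtain_subset_with_card_n)
  then obtain A where A: "\<forall>u\<in>N. A u \<subseteq> L u \<and> card (A u) = 3" by metis
  obtain u1 u2 u3 u4 where u: "N = {u1, u2, u3, u4}" "distinct [u1, u2, u3, u4]"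
    using card_4_elements[OF N] by metis
  consider (differ) i j where "i \<in> N" "j \<in> N" "A i \<noteq> A j"
    | (shifted) l where "l \<in> N" "s l \<noteq> \<Sum>(A u1)" "\<forall>u\<in>N. A u = A u1"
    | (uniform) "\<forall>u\<in>N. A u = A u1" "\<forall>u\<in>N. s u = \<Sum>(A u1)"
  proof (cases "\<exists>i\<in>N. \<exists>j\<in>N. A i \<noteq> A j")
    case True
    then show ?thesis using that(1) by blast
  next
    case False
    then have "\<forall>u\<in>N. A u = A u1" using u(1) by blast
    then show ?thesis using that(2,3) by blast
  qed
  then show ?thesis
  proof cases
    case differ
    then obtain k l where kl: "N = {i, j, k, l}" "distinct [i, j, k, l]"
      using card_4_enumerate[OF N] by metis
    obtain p q where "p \<in> A i" "q \<in> A j" "p \<noteq> q" "\<forall>y\<in>A k. p + q + y \<noteq> s l"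
      using ex_pair_avoiding_diagonal_translate_if_ne[of "A i" "A j" "A k" "s l"] A differ kl
      by auto
    then show ?thesis
      using admissible_choice_4_from_pair[OF kl no_adj, where L = L and s = s and p = p
          and q = q and C = "A k" and D = "A l"] A kl
      by auto
  next
    case shifted
    obtain i where i: "i \<in> N" "i \<noteq> l" using u shifted(1) by auto
    obtain j k where "N = {l, i, j, k}" "distinct [l, i, j, k]"
      using card_4_enumerate[OF N shifted(1) i(1)] i(2) by metis
    then have ijkl: "N = {i, j, k, l}" "distinct [i, j, k, l]" by auto
    obtain p q where "p \<in> A u1" "q \<in> A u1" "p \<noteq> q" "\<forall>y\<in>A u1. p + q + y \<noteq> s l"
      using ex_pair_avoiding_diagonal_translate_self[of "A u1" "s l"] A shifted(2) u(1) by auto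
    then show ?thesis
      using admissible_choice_4_from_pair[OF ijkl no_adj, where L = L and s = s and p = p
          and q = q and C = "A u1" and D = "A u1"] A shifted(3) ijkl
      by (auto simp: subset_iff)
  next
    case uniform
    then show ?thesis
      using admissible_choice_4_uniform[OF u no_adj, of "A u1"] A u(1) by auto
  qed
qed

lemma admissible_choice_exists:
  assumes N: "finite N" "card N \<le> 4"
    and L: "\<forall>u\<in>N. finite (L u) \<and> 3 + card {w \<in> N. adj u w} \<le> card (L u)"
    and adj: "\<forall>u w. adj u w = adj w u" "\<forall>u. \<not> adj u u"
  shows "\<exists>f. admissible_choice N L s adj f"
proof -
  consider "card N \<le> 1" | "card N = 2" | "card N = 3" | "card N = 4" using N(2) by linarith
  then show ?thesis
  proof cases
    case 1
    have "\<forall>u\<in>N. L u \<noteq> {}" using L by fastforce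
    from admissible_choice_le_1[OF 1 N(1) this] show ?thesis using adj(2) by blast
  next
    case 2
    then obtain u1 u2 where "N = {u1, u2}" "u1 \<noteq> u2" by (auto simp: card_2_iff)
    from admissible_choice_2[OF this L adj] show ?thesis .
  next
    case 3
    then obtain u1 u2 u3 where "N = {u1, u2, u3}" "distinct [u1, u2, u3]"
      by (auto simp: card_3_iff)
    from admissible_choice_3[OF this L adj] show ?thesis .
  next
    case 4
    show ?thesis
    proof (cases "\<exists>a\<in>N. \<exists>b\<in>N. adj a b")
      case True
      then obtain a b where ab: "a \<in> N" "b \<in> N" "adj a b" by blast
      then have "a \<noteq> b" using adj(2) by auto
      then obtain k l where "N = {a, b, k, l}" "distinct [a, b, k, l]"
        using card_4_enumerate[OF 4 ab(1,2)] by metis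
      then have "N = {k, l, a, b}" "distinct [k, l, a, b]" by auto
      from admissible_choice_4_edge[OF this L adj ab(3)] show ?thesis .
    next
      case False
      moreover have "\<forall>u\<in>N. finite (L u) \<and> 3 \<le> card (L u)" using L by fastforce
      ultimately show ?thesis by (intro admissible_choice_4_independent[OF 4]) auto
    qed
  qed
qed

section \<open>Extending a colouring to a new vertex\<close>

lemma of_nat_le_ceiling_half_iff:
  "real k \<le> of_int \<lceil>real d / 2\<rceil> \<longleftrightarrow> 2 * k \<le> d + 1"
proof -
  have "real k \<le> of_int \<lceil>real d / 2\<rceil> \<longleftrightarrow> int k \<le> \<lceil>real d / 2\<rceil>"
    by (metis of_int_le_iff of_int_of_nat_eq)
  also have "\<dots> \<longleftrightarrow> real k - 1 < real d / 2" by (simp add: le_ceiling_iff)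
  also have "\<dots> \<longleftrightarrow> 2 * k \<le> d + 1" by linarith
  finally show ?thesis .
qed

definition qm_bound :: "'a set \<Rightarrow> 'a set set \<Rightarrow> ('a set \<Rightarrow> nat) \<Rightarrow> bool" where
  "qm_bound V E c \<longleftrightarrow>
     (\<forall>x\<in>V. \<forall>i. 2 * card {u \<in> nbhd V E x. c {x, u} = i} \<le> degree V E x + 1)"

lemma quasi_majority_iff_qm_bound: "quasi_majority V E c \<longleftrightarrow> qm_bound V E c"
  unfolding quasi_majority_def qm_bound_def by (simp add: of_nat_le_ceiling_half_iff)

text \<open>The ends of a K2 component cannot be distinguished; excluding them gives an invariant
  that survives deleting a vertex.\<close>

definition weak_nsd :: "'a set \<Rightarrow> 'a set set \<Rightarrow> ('a set \<Rightarrow> nat) \<Rightarrow> bool" where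
  "weak_nsd V E c \<longleftrightarrow> (\<forall>u\<in>V. \<forall>w\<in>V. {u, w} \<in> E \<longrightarrow>
     \<not> (degree V E u = 1 \<and> degree V E w = 1) \<longrightarrow> sigma V E c u \<noteq> sigma V E c w)"

lemma nsd_if_weak_nsd: "nice V E \<Longrightarrow> weak_nsd V E c \<Longrightarrow> nsd V E c"
  unfolding nice_def weak_nsd_def nsd_def by blast

definition qm_wnsd_coloring :: "'a set \<Rightarrow> 'a set set \<Rightarrow> ('a set \<Rightarrow> nat) \<Rightarrow> bool" where
  "qm_wnsd_coloring V E c \<longleftrightarrow> edge_coloring E 7 c \<and> qm_bound V E c \<and> weak_nsd V E c"

lemma simple_graph_edgeE:
  assumes "simple_graph V E" "e \<in> E"
  obtains a b where "a \<noteq> b" "a \<in> V" "b \<in> V" "e = {a, b}"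
  using assms unfolding simple_graph_def by blast

lemma simple_graph_edgeD:
  assumes "simple_graph V E" "{u, w} \<in> E"
  shows "u \<noteq> w" "u \<in> V" "w \<in> V"
  using simple_graph_edgeE[OF assms] by (metis doubleton_eq_iff)+

lemma finite_nbhd: "simple_graph V E \<Longrightarrow> finite (nbhd V E u)"
  unfolding simple_graph_def nbhd_def by auto

lemma simple_graph_delete_vertex:
  assumes "simple_graph V E"
  shows "simple_graph (V - {v}) {e \<in> E. v \<notin> e}"
  using assms unfolding simple_graph_def by fastforce

lemma max_degree_le_delete_vertex:
  assumes "simple_graph V E" "max_degree_le V E D"
  shows "max_degree_le (V - {v}) {e \<in> E. v \<notin> e} D"
  unfolding max_degree_le_def
proof
  fix u assume u: "u \<in> V - {v}"
  have "nbhd (V - {v}) {e \<in> E. v \<notin> e} u \<subseteq> nbhd V E u" unfolding nbhd_def by auto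
  then have "degree (V - {v}) {e \<in> E. v \<notin> e} u \<le> degree V E u"
    unfolding degree_def using finite_nbhd[OF assms(1)] by (rule card_mono[rotated])
  also have "\<dots> \<le> D" using assms(2) u unfolding max_degree_le_def by auto
  finally show "degree (V - {v}) {e \<in> E. v \<notin> e} u \<le> D" .
qed

lemma strict_majority_unique:
  assumes "finite S"
    and "card S < 2 * card {w \<in> S. col w = i}" "card S < 2 * card {w \<in> S. col w = j}"
  shows "i = j"
proof (rule ccontr)
  assume "i \<noteq> j"
  then have "card {w \<in> S. col w = i} + card {w \<in> S. col w = j}
      = card ({w \<in> S. col w = i} \<union> {w \<in> S. col w = j})"
    using assms(1) by (intro card_Un_disjoint[symmetric]) auto
  also have "\<dots> \<le> card S" using assms(1) by (intro card_mono) auto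
  finally show False using assms(2,3) by linarith
qed

locale vertex_extension =
  fixes V :: "'a set" and E :: "'a set set" and v :: 'a and c' :: "'a set \<Rightarrow> nat"
  assumes simple: "simple_graph V E"
    and max_degree: "max_degree_le V E 4"
    and v_in_V: "v \<in> V"
    and coloring': "qm_wnsd_coloring (V - {v}) {e \<in> E. v \<notin> e} c'"
begin

abbreviation "V' \<equiv> V - {v}"
abbreviation "E' \<equiv> {e \<in> E. v \<notin> e}"

definition "N = nbhd V E v"

definition "s u = int (sigma V' E' c' u)"

text \<open>The inequality in \<open>qm_colours\<close> is quasi-majority at \<open>u\<close> once \<open>vu\<close> gets colour \<open>x\<close>.
  Only the neighbours of \<open>u\<close> outside \<open>N\<close> are avoided here; those inside \<open>N\<close> are dealt with by
  the choice of \<open>f\<close>.\<close>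

definition "qm_colours u = {x \<in> {1..7::int}.
  2 * (card {w \<in> nbhd V' E' u. c' {u, w} = nat x} + 1) \<le> degree V E u + 1}"

definition "cand u = {x \<in> qm_colours u. \<forall>w \<in> nbhd V' E' u - N. s u + x \<noteq> s w}"

lemma edgeD: "{a, b} \<in> E \<Longrightarrow> a \<noteq> b \<and> a \<in> V \<and> b \<in> V"
  using simple_graph_edgeD[OF simple] by blast

lemma in_N_iff: "u \<in> N \<longleftrightarrow> {u, v} \<in> E"
  unfolding N_def nbhd_def using edgeD by (auto simp: insert_commute)

lemma N_subset: "N \<subseteq> V'"
  using edgeD unfolding N_def nbhd_def by auto

lemma finite_N: "finite N"
  using finite_nbhd[OF simple] unfolding N_def .

lemma card_N: "card N \<le> 4"
  using max_degree v_in_V unfolding max_degree_le_def degree_def N_def by auto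

lemma finite_nbhd': "finite (nbhd V' E' u)"
  using finite_nbhd[OF simple_graph_delete_vertex[OF simple]] .

lemma v_notin_nbhd': "v \<notin> nbhd V' E' u"
  unfolding nbhd_def by auto

lemma nbhd_eq:
  assumes "u \<in> V" "u \<noteq> v"
  shows "nbhd V E u = nbhd V' E' u \<union> (if u \<in> N then {v} else {})"
  using assms v_in_V unfolding nbhd_def in_N_iff by (auto simp: insert_commute)

lemma degree_eq:
  assumes "u \<in> V" "u \<noteq> v"
  shows "degree V E u = degree V' E' u + (if u \<in> N then 1 else 0)"
  unfolding degree_def nbhd_eq[OF assms] using finite_nbhd' v_notin_nbhd' by auto

lemma nbhd'_inter_N: "u \<in> N \<Longrightarrow> nbhd V' E' u \<inter> N = {w \<in> N. {u, w} \<in> E}"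
  using N_subset unfolding nbhd_def by auto

lemma degree_in_N: "u \<in> N \<Longrightarrow> degree V E u = card (nbhd V' E' u) + 1"
  using degree_eq[of u] N_subset unfolding degree_def by auto

lemma finite_qm_colours: "finite (qm_colours u)"
  unfolding qm_colours_def by (rule finite_subset[of _ "{1..7::int}"]) auto

lemma card_qm_colours:
  assumes u: "u \<in> N"
  shows "6 \<le> card (qm_colours u)"
proof -
  let ?nb = "nbhd V' E' u"
  have "x = y" if x: "x \<in> {1..7} - qm_colours u" and y: "y \<in> {1..7} - qm_colours u" for x y
  proof -
    have "card ?nb < 2 * card {w \<in> ?nb. c' {u, w} = nat x}"
      and "card ?nb < 2 * card {w \<in> ?nb. c' {u, w} = nat y}"
      using x y degree_in_N[OF u] unfolding qm_colours_def by auto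
    then have "nat x = nat y" by (rule strict_majority_unique[OF finite_nbhd'])
    moreover have "0 \<le> x" "0 \<le> y" using x y by auto
    ultimately show "x = y" by (simp add: eq_nat_nat_iff)
  qed
  then have "card ({1..7} - qm_colours u) \<le> 1" by (simp add: card_le_Suc0_iff_eq)
  moreover have "card ({1..7::int} - qm_colours u) = card {1..7::int} - card (qm_colours u)"
    using finite_qm_colours by (rule card_Diff_subset) (auto simp: qm_colours_def)
  ultimately show ?thesis by simp
qed

lemma card_cand:
  assumes u: "u \<in> N"
  shows "3 + card {w \<in> N. {u, w} \<in> E} \<le> card (cand u)"
proof -
  let ?nb = "nbhd V' E' u" and ?k = "card {w \<in> N. {u, w} \<in> E}"
  have "card ?nb \<le> 3"
    using degree_in_N[OF u] max_degree u N_subset unfolding max_degree_le_def by fastforce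
  have "card (?nb - N) = card ?nb - ?k"
    using card_Diff_subset_Int[of ?nb N] finite_nbhd' finite_N nbhd'_inter_N[OF u] by auto
  moreover have "?k \<le> card ?nb"
    using card_mono[OF finite_nbhd', of "?nb \<inter> N"] nbhd'_inter_N[OF u] by auto
  moreover have "card (qm_colours u) - card ({}::int set) - card (?nb - N)
      \<le> card {x \<in> qm_colours u. x \<notin> {} \<and> (\<forall>w \<in> ?nb - N. s u + x \<noteq> s w)}"
    using finite_qm_colours finite_nbhd' by (intro card_avoiding_values) auto
  then have "card (qm_colours u) - card (?nb - N) \<le> card (cand u)"
    unfolding cand_def by simp
  ultimately show ?thesis using card_qm_colours[OF u] \<open>card ?nb \<le> 3\<close> by linarith
qed

lemma finite_cand: "finite (cand u)"
  using finite_qm_colours unfolding cand_def by simp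

definition "f = (SOME f. admissible_choice N cand s (\<lambda>u w. {u, w} \<in> E) f)"

lemma f_admissible: "admissible_choice N cand s (\<lambda>u w. {u, w} \<in> E) f"
proof -
  have "\<exists>f. admissible_choice N cand s (\<lambda>u w. {u, w} \<in> E) f"
  proof (rule admissible_choice_exists)
    show "\<forall>u\<in>N. finite (cand u) \<and> 3 + card {w \<in> N. {u, w} \<in> E} \<le> card (cand u)"
      using finite_cand card_cand by blast
    show "\<forall>u w. ({u, w} \<in> E) = ({w, u} \<in> E)" by (simp add: insert_commute)
    show "\<forall>u. {u, u} \<notin> E" using edgeD by blast
  qed (use finite_N card_N in auto)
  then show ?thesis unfolding f_def by (rule someI_ex)
qed

lemma f_in_cand: "u \<in> N \<Longrightarrow> f u \<in> cand u"
  using f_admissible unfolding admissible_choice_def by blast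

lemma f_range: "u \<in> N \<Longrightarrow> 1 \<le> f u \<and> f u \<le> 7"
  using f_in_cand unfolding cand_def qm_colours_def by auto

definition "c e = (if v \<in> e then nat (f (the_elem (e - {v}))) else c' e)"

lemma c_at_v: "u \<noteq> v \<Longrightarrow> c {u, v} = nat (f u)"
proof -
  assume "u \<noteq> v"
  then have "{u, v} - {v} = {u}" by auto
  then show ?thesis unfolding c_def by simp
qed

lemma c_off_v: "v \<notin> e \<Longrightarrow> c e = c' e"
  unfolding c_def by simp

lemma int_c_at_v:
  assumes "u \<in> N"
  shows "int (c {v, u}) = f u"
proof -
  have "u \<noteq> v" using assms N_subset by auto
  then have "c {v, u} = nat (f u)" using c_at_v by (simp add: insert_commute)
  then show ?thesis using f_range[OF assms] by simp
qed

lemma c_nbhd': "w \<in> nbhd V' E' u \<Longrightarrow> c {u, w} = c' {u, w}"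
  unfolding nbhd_def by (intro c_off_v) auto

lemma sigma_at_v: "int (sigma V E c v) = sum f N"
  unfolding sigma_def N_def[symmetric] using int_c_at_v by simp

lemma sigma_off_v:
  assumes "u \<in> V" "u \<noteq> v"
  shows "int (sigma V E c u) = s u + (if u \<in> N then f u else 0)"
proof -
  have "sigma V E c u = (\<Sum>w\<in>nbhd V' E' u. c {u, w}) + (if u \<in> N then c {u, v} else 0)"
    unfolding sigma_def nbhd_eq[OF assms] using finite_nbhd' v_notin_nbhd'
    by (simp add: sum.union_disjoint)
  also have "(\<Sum>w\<in>nbhd V' E' u. c {u, w}) = sigma V' E' c' u"
    unfolding sigma_def using c_nbhd' by simp
  finally show ?thesis
    using c_at_v[OF assms(2)] f_range[of u] unfolding s_def by auto
qed

lemma c_at_v_eq: "u \<in> N \<Longrightarrow> c {v, u} = i \<longleftrightarrow> f u = int i"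
  using int_c_at_v[symmetric] by simp

lemma c_edge_coloring: "edge_coloring E 7 c"
  unfolding edge_coloring_def
proof
  fix e assume e: "e \<in> E"
  then obtain a b where ab: "a \<noteq> b" "e = {a, b}" by (rule simple_graph_edgeE[OF simple])
  show "c e \<in> {1..7}"
  proof (cases "v \<in> e")
    case True
    then obtain u where u: "e = {v, u}" using ab by auto
    then have "u \<in> N" using e in_N_iff by (simp add: insert_commute)
    then show ?thesis using int_c_at_v[of u] f_range[of u] u by auto
  next
    case False
    then show ?thesis
      using e coloring' c_off_v[OF False] unfolding qm_wnsd_coloring_def edge_coloring_def by auto
  qed
qed

lemma c_qm_bound: "qm_bound V E c"
  unfolding qm_bound_def
proof (intro ballI allI)
  fix x i assume x: "x \<in> V"
  show "2 * card {u \<in> nbhd V E x. c {x, u} = i} \<le> degree V E x + 1"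
  proof (cases "x = v")
    case True
    then have "{u \<in> nbhd V E x. c {x, u} = i} = {u \<in> N. f u = int i}"
      using c_at_v_eq unfolding N_def by blast
    moreover have "degree V E x = card N" using True unfolding degree_def N_def by simp
    ultimately show ?thesis using f_admissible unfolding admissible_choice_def by simp
  next
    case False
    let ?old = "{w \<in> nbhd V' E' x. c' {x, w} = i}"
    have "{u \<in> nbhd V E x. c {x, u} = i}
        = ?old \<union> (if x \<in> N \<and> nat (f x) = i then {v} else {})"
      using nbhd_eq[OF x False] c_at_v[OF False] c_nbhd' v_notin_nbhd' by auto
    then have card_eq: "card {u \<in> nbhd V E x. c {x, u} = i}
        = card ?old + (if x \<in> N \<and> nat (f x) = i then 1 else 0)"
      using finite_nbhd' v_notin_nbhd' by (auto simp: card_Un_disjoint)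
    show ?thesis
    proof (cases "x \<in> N \<and> nat (f x) = i")
      case True
      then show ?thesis using card_eq f_in_cand[of x] unfolding cand_def qm_colours_def by auto
    next
      case old: False
      have "2 * card ?old \<le> degree V' E' x + 1"
        using coloring' x False unfolding qm_wnsd_coloring_def qm_bound_def by blast
      then show ?thesis using card_eq old degree_eq[OF x False] by simp
    qed
  qed
qed

lemma sigma_v_neq_N:
  assumes u: "u \<in> N" and not_K2: "\<not> (degree V E v = 1 \<and> degree V E u = 1)"
  shows "sigma V E c v \<noteq> sigma V E c u"
proof -
  have uV: "u \<in> V" "u \<noteq> v" using u N_subset by auto
  have "sum f N \<noteq> s u + f u"
  proof (cases "2 \<le> card N")
    case True
    then show ?thesis using f_admissible u unfolding admissible_choice_def by blast
  next
    case False
    then have "card N = 1" using u finite_N by (metis One_nat_def card_0_eq empty_iff less_2_cases not_le)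
    then have N: "N = {u}" using u by (metis card_1_singletonE singletonD)
    then have "degree V E v = 1" unfolding degree_def N_def[symmetric] by simp
    then have "degree V' E' u \<noteq> 0" using not_K2 degree_eq[OF uV] u by auto
    then obtain w where w: "w \<in> nbhd V' E' u" unfolding degree_def by fastforce
    then have "1 \<le> c' {u, w}"
      using coloring' unfolding qm_wnsd_coloring_def edge_coloring_def nbhd_def by fastforce
    also have "\<dots> \<le> sigma V' E' c' u"
      unfolding sigma_def by (rule member_le_sum[OF w]) (simp_all add: finite_nbhd')
    finally show ?thesis using N unfolding s_def by simp
  qed
  then show ?thesis using sigma_at_v sigma_off_v[OF uV] u by auto
qed

lemma sigma_N_neq:
  assumes u: "u \<in> N" and uw: "{u, w} \<in> E" and w: "w \<noteq> v"
  shows "sigma V E c u \<noteq> sigma V E c w"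
proof -
  have uV: "u \<in> V" "u \<noteq> v" using u N_subset by auto
  have wV: "w \<in> V" using uw edgeD by blast
  show ?thesis
  proof (cases "w \<in> N")
    case True
    then have "s u + f u \<noteq> s w + f w"
      using f_admissible u uw unfolding admissible_choice_def by blast
    then show ?thesis using sigma_off_v[OF uV] sigma_off_v[OF wV w] u True by auto
  next
    case False
    have "w \<in> nbhd V' E' u - N" using uw wV w uV False unfolding nbhd_def by auto
    then have "s u + f u \<noteq> s w" using f_in_cand[OF u] unfolding cand_def by blast
    then show ?thesis using sigma_off_v[OF uV] sigma_off_v[OF wV w] u False by auto
  qed
qed

lemma sigma_far_neq:
  assumes xy: "{x, y} \<in> E" "x \<notin> insert v N" "y \<notin> insert v N"
    and not_K2: "\<not> (degree V E x = 1 \<and> degree V E y = 1)"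
  shows "sigma V E c x \<noteq> sigma V E c y"
proof -
  have xV: "x \<in> V" "x \<noteq> v" and yV: "y \<in> V" "y \<noteq> v" using xy edgeD by auto
  have deg: "degree V' E' x = degree V E x" "degree V' E' y = degree V E y"
    using degree_eq[OF xV] degree_eq[OF yV] xy by auto
  have "{x, y} \<in> E'" "x \<in> V'" "y \<in> V'" using xy xV yV by auto
  moreover have "weak_nsd V' E' c'" using coloring' by (simp add: qm_wnsd_coloring_def)
  moreover have "\<not> (degree V' E' x = 1 \<and> degree V' E' y = 1)" using not_K2 deg by simp
  ultimately have "sigma V' E' c' x \<noteq> sigma V' E' c' y" unfolding weak_nsd_def by blast
  then show ?thesis using sigma_off_v[OF xV] sigma_off_v[OF yV] xy unfolding s_def by auto
qed

lemma c_weak_nsd: "weak_nsd V E c"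
  unfolding weak_nsd_def
proof (intro ballI impI)
  fix x y assume "x \<in> V" "y \<in> V" and xy: "{x, y} \<in> E"
    and not_K2: "\<not> (degree V E x = 1 \<and> degree V E y = 1)"
  have yx: "{y, x} \<in> E" using xy by (simp add: insert_commute)
  consider "x = v" | "y = v" | "x \<in> N" "y \<noteq> v" | "y \<in> N" "x \<noteq> v"
    | "x \<notin> insert v N" "y \<notin> insert v N" by blast
  then show "sigma V E c x \<noteq> sigma V E c y"
  proof cases
    case 1
    then show ?thesis using sigma_v_neq_N[of y] xy not_K2 in_N_iff by (simp add: insert_commute)
  next
    case 2
    then show ?thesis using sigma_v_neq_N[of x] xy not_K2 in_N_iff by metis
  next
    case 3
    then show ?thesis using sigma_N_neq xy by blast
  next
    case 4
    then show ?thesis using sigma_N_neq yx by metis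
  next
    case 5
    then show ?thesis using sigma_far_neq xy not_K2 by blast
  qed
qed

lemma c_qm_wnsd_coloring: "qm_wnsd_coloring V E c"
  unfolding qm_wnsd_coloring_def using c_edge_coloring c_qm_bound c_weak_nsd by blast

end

lemma qm_wnsd_coloring_exists:
  assumes "simple_graph V E" "max_degree_le V E 4"
  shows "\<exists>c. qm_wnsd_coloring V E c"
  using assms
proof (induction "card V" arbitrary: V E rule: less_induct)
  case less
  show ?case
  proof (cases "V = {}")
    case True
    then have "E = {}" using simple_graph_edgeE[OF less.prems(1)] by blast
    then show ?thesis
      using True unfolding qm_wnsd_coloring_def edge_coloring_def qm_bound_def weak_nsd_def by auto
  next
    case False
    then obtain v where v: "v \<in> V" by blast
    have "finite V" using less.prems(1) by (simp add: simple_graph_def)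
    then have "card (V - {v}) < card V" using v by (rule card_Diff1_less)
    then obtain c' where "qm_wnsd_coloring (V - {v}) {e \<in> E. v \<notin> e} c'"
      using less.hyps simple_graph_delete_vertex[OF less.prems(1)]
        max_degree_le_delete_vertex[OF less.prems] by blast
    then interpret vertex_extension V E v c'
      using less.prems v by unfold_locales
    show ?thesis using c_qm_wnsd_coloring by blast
  qed
qed

theorem mainTheorem3:
  fixes V :: "'a set" and E :: "'a set set"
  assumes "simple_graph V E" and "nice V E" and "max_degree_le V E 4"
  shows "(\<exists>k. qm_nsd_colorable V E k) \<and> chi_qm_sigma V E \<le> 7"
proof -
  obtain c where "qm_wnsd_coloring V E c"
    using qm_wnsd_coloring_exists assms(1,3) by blast
  then have "qm_nsd_colorable V E 7"
    unfolding qm_nsd_colorable_def qm_wnsd_coloring_def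
    using quasi_majority_iff_qm_bound nsd_if_weak_nsd[OF assms(2)] by blast
  then show ?thesis unfolding chi_qm_sigma_def by (auto intro: Least_le)
qed

end
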